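(* Let $N\ge2$, $d\ge1$, and let $x(t)=(x_1(t),\dots,x_N(t))$ be a (Carathéodory) solution of $$\dot x_i(t)=\frac{\lambda_i(x)}{N}\sum_{j=1}^N M_{ij}(t)\,\phi_{ij}(x_i,x_j)\,(x_j(t)-x_i(t)),\qquad i=1,\dots,N,$$ where $x_i\in\mathbb{R}^d$, all $M_{ij}:[0,+\infty)\to[0,1]$ are Lebesgue measurable, and $\lambda_i:\mathbb{R}^{Nd}\to\mathbb{R}^+$, $\phi_{ij}:\mathbb{R}^d\times\mathbb{R}^d\to\mathbb{R}^+$ are Lipschitz continuous and strictly positive. Define $\mathrm{supp}(x(t))$ as the closed convex hull of $\{x_1(t),\dots,x_N(t)\}$. Then for $0\le t\le s$ it holds $\mathrm{supp}(x(t))\supseteq\mathrm{supp}(x(s))$. In particular, when $d=1$, the function $t\mapsto\max_j x_j(t)$ is non-increasing and $t\mapsto\min_j x_j(t)$ is non-decreasing; and in any dimension the diameter $t\mapsto\max_{i,j}|x_i(t)-x_j(t)|$ is non-increasing.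
   Context: $|\cdot|$ is the Euclidean norm. *)

theory Defs
  imports "HOL-Analysis.Analysis"
begin

text \<open>Agents are indexed by a finite type 'n (N = CARD('n)); positions live in
  real^'d (d = CARD('d)); a configuration is a point of real^'d^'n = R^(Nd).\<close>

definition consensus_field ::
  "('n::finite \<Rightarrow> real^'d^'n \<Rightarrow> real) \<Rightarrow> ('n \<Rightarrow> 'n \<Rightarrow> real \<Rightarrow> real)
   \<Rightarrow> ('n \<Rightarrow> 'n \<Rightarrow> real^'d::finite \<Rightarrow> real^'d \<Rightarrow> real)
   \<Rightarrow> real \<Rightarrow> real^'d^'n \<Rightarrow> real^'d^'n" where
  "consensus_field lam M phi t y =
     (\<chi> i. (lam i y / real CARD('n)) *\<^sub>R
        (\<Sum>j\<in>UNIV. (M i j t * phi i j (y $ i) (y $ j)) *\<^sub>R (y $ j - y $ i)))"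

text \<open>Caratheodory solution on [0,+\<infinity>): the right-hand side along the solution is
  Lebesgue integrable on every [0,t] and x satisfies the integral equation
  (equivalently, x is absolutely continuous and solves the ODE a.e.).\<close>

definition caratheodory_solution ::
  "(real \<Rightarrow> 'a::euclidean_space \<Rightarrow> 'a) \<Rightarrow> (real \<Rightarrow> 'a) \<Rightarrow> bool" where
  "caratheodory_solution F x \<longleftrightarrow>
     (\<forall>t\<ge>0. (\<lambda>s. F s (x s)) absolutely_integrable_on {0..t} \<and>
            x t = x 0 + integral {0..t} (\<lambda>s. F s (x s)))"

definition supp :: "real^'d^'n::finite \<Rightarrow> (real^'d) set" where
  "supp y = closure (convex hull (range (\<lambda>i. y $ i)))"

end

theory Submission
  imports Defs
begin

text \<open>For every direction v the support value \<open>max\<^sub>j v \<bullet> x\<^sub>j(t)\<close> is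
  non-increasing. Agents strictly below the maximum stay below it for a while by continuity.
  For an agent attaining the maximum, every term \<open>v \<bullet> (x\<^sub>j - x\<^sub>i)\<close> of its velocity is
  \<open>\<le> 0\<close>. Its velocity is bounded by a continuous majorant that vanishes at that time, so the
  maximum grows by at most \<open>\<epsilon>(s - t)\<close> near it. A continuous induction then propagates this
  bound over \<open>[t, s]\<close>, for every \<open>\<epsilon> > 0\<close>. Since closed convex hulls, coordinate
  extrema and diameters are all controlled by support values, the three claims follow.\<close>

lemma real_closed_induct:
  fixes a b :: real
  assumes "a \<le> b" and "closed C" and "a \<in> C"
    and step: "\<And>\<tau>. \<tau> \<in> C \<Longrightarrow> a \<le> \<tau> \<Longrightarrow> \<tau> < b \<Longrightarrow>
        eventually (\<lambda>\<sigma>. \<sigma> \<le> b \<longrightarrow> \<sigma> \<in> C) (at_right \<tau>)"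
  shows "b \<in> C"
proof (rule ccontr)
  assume "b \<notin> C"
  define D where "D = {a..b} - C"
  define \<tau> where "\<tau> = Inf D"
  have "b \<in> D" using \<open>a \<le> b\<close> \<open>b \<notin> C\<close> by (simp add: D_def)
  have bdd: "bdd_below D" unfolding D_def by (rule bdd_belowI[of _ a]) auto
  have \<tau>_le: "\<tau> \<le> d" if "d \<in> D" for d
    unfolding \<tau>_def using bdd that by (intro cInf_lower)
  have "a \<le> \<tau>" unfolding \<tau>_def using \<open>b \<in> D\<close> by (intro cInf_greatest) (auto simp: D_def)
  have "{a..<\<tau>} \<subseteq> C"
  proof
    fix s assume s: "s \<in> {a..<\<tau>}"
    then have "s \<notin> D" using \<tau>_le[of s] by auto
    with s \<tau>_le[OF \<open>b \<in> D\<close>] show "s \<in> C" by (auto simp: D_def)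
  qed
  then have "{a..\<tau>} \<subseteq> C"
    using \<open>closed C\<close> \<open>a \<in> C\<close> closure_minimal[of "{a..<\<tau>}" C] by (cases "a = \<tau>") auto
  then have "\<tau> \<in> C" "\<tau> < b"
    using \<open>a \<le> \<tau>\<close> \<tau>_le[OF \<open>b \<in> D\<close>] \<open>b \<notin> C\<close> by (auto simp: le_less)
  with step[of \<tau>] \<open>a \<le> \<tau>\<close> obtain e where "e > \<tau>"
    and e: "\<And>\<sigma>. \<tau> < \<sigma> \<Longrightarrow> \<sigma> < e \<Longrightarrow> \<sigma> \<le> b \<Longrightarrow> \<sigma> \<in> C"
    unfolding eventually_at_right_field by blast
  have "e \<le> \<tau>" unfolding \<tau>_def
  proof (rule cInf_greatest)
    show "D \<noteq> {}" using \<open>b \<in> D\<close> by blast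
    fix d assume "d \<in> D"
    with \<tau>_le[of d] \<open>\<tau> \<in> C\<close> e[of d] show "e \<le> d" by (force simp: D_def)
  qed
  with \<open>e > \<tau>\<close> show False by simp
qed

lemma continuous_on_less_right_neighbourhood:
  fixes f :: "real \<Rightarrow> real"
  assumes "continuous_on S f" "\<tau> \<in> S" "f \<tau> < c"
  obtains e where "e > \<tau>" "\<And>s. s \<in> S \<Longrightarrow> \<tau> \<le> s \<Longrightarrow> s < e \<Longrightarrow> f s < c"
proof -
  obtain d where "d > 0" and d: "\<And>s. s \<in> S \<Longrightarrow> dist s \<tau> < d \<Longrightarrow> dist (f s) (f \<tau>) < c - f \<tau>"
    using assms unfolding continuous_on_iff by (metis diff_gt_0_iff_gt)
  show thesis
  proof
    show "\<tau> + d > \<tau>" using \<open>d > 0\<close> by simp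
    fix s assume "s \<in> S" "\<tau> \<le> s" "s < \<tau> + d"
    with d[of s] show "f s < c" by (simp add: dist_real_def abs_less_iff)
  qed
qed

text \<open>The derivative \<open>h\<close> of \<open>g\<close> is merely integrable (the coupling weights are only
  measurable in time); pointwise control near a time comes from the continuous majorant \<open>B\<close>.\<close>

locale max_rate_family =
  fixes a b :: real and g h B :: "'i::finite \<Rightarrow> real \<Rightarrow> real"
  assumes g_cont: "continuous_on {a..b} (g i)"
    and g_has_integral: "a \<le> \<tau> \<Longrightarrow> \<tau> \<le> \<sigma> \<Longrightarrow> \<sigma> \<le> b \<Longrightarrow> (h i has_integral g i \<sigma> - g i \<tau>) {\<tau>..\<sigma>}"
    and h_le_B: "s \<in> {a..b} \<Longrightarrow> h i s \<le> B i s"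
    and B_cont: "continuous_on {a..b} (B i)"
    and B_nonpos_at_max: "s \<in> {a..b} \<Longrightarrow> (\<And>j. g j s \<le> g i s) \<Longrightarrow> B i s \<le> 0"
begin

lemma eventually_right_growth_le:
  assumes "\<tau> \<in> {a..<b}" "\<epsilon> > 0"
  shows "eventually (\<lambda>\<sigma>. \<sigma> \<le> b \<longrightarrow> g i \<sigma> \<le> (MAX j. g j \<tau>) + \<epsilon> * (\<sigma> - \<tau>)) (at_right \<tau>)"
proof (cases "g i \<tau> < (MAX j. g j \<tau>)")
  case True
  obtain e where "e > \<tau>"
    and e: "\<And>s. s \<in> {a..b} \<Longrightarrow> \<tau> \<le> s \<Longrightarrow> s < e \<Longrightarrow> g i s < (MAX j. g j \<tau>)"
    using continuous_on_less_right_neighbourhood[OF g_cont _ True] assms(1) by auto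
  show ?thesis
    using eventually_at_right_real[OF \<open>e > \<tau>\<close>]
  proof eventually_elim
    case (elim \<sigma>)
    then show ?case using e[of \<sigma>] assms by (auto intro: add_increasing2)
  qed
next
  case False
  moreover have "g j \<tau> \<le> (MAX j. g j \<tau>)" for j by (rule Max_ge) auto
  ultimately have "g j \<tau> \<le> g i \<tau>" for j by (meson not_less order.trans)
  then have "B i \<tau> < \<epsilon>" using B_nonpos_at_max[of \<tau> i] assms by auto
  obtain e where "e > \<tau>"
    and e: "\<And>s. s \<in> {a..b} \<Longrightarrow> \<tau> \<le> s \<Longrightarrow> s < e \<Longrightarrow> B i s < \<epsilon>"
    using continuous_on_less_right_neighbourhood[OF B_cont _ \<open>B i \<tau> < \<epsilon>\<close>] assms(1) by auto
  show ?thesis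
    using eventually_at_right_real[OF \<open>e > \<tau>\<close>]
  proof eventually_elim
    case (elim \<sigma>)
    show ?case
    proof
      assume "\<sigma> \<le> b"
      have "(h i has_integral g i \<sigma> - g i \<tau>) {\<tau>..\<sigma>}"
        by (rule g_has_integral) (use assms(1) elim \<open>\<sigma> \<le> b\<close> in auto)
      moreover have "((\<lambda>s. \<epsilon>) has_integral \<epsilon> * (\<sigma> - \<tau>)) {\<tau>..\<sigma>}"
        using has_integral_const_real[of \<epsilon> \<tau> \<sigma>] elim by (simp add: mult.commute)
      moreover have "h i s \<le> \<epsilon>" if "s \<in> {\<tau>..\<sigma>}" for s
        using h_le_B[of s i] e[of s] that elim assms(1) \<open>\<sigma> \<le> b\<close> by fastforce
      ultimately have "g i \<sigma> - g i \<tau> \<le> \<epsilon> * (\<sigma> - \<tau>)"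
        by (rule has_integral_le)
      moreover have "g i \<tau> \<le> (MAX j. g j \<tau>)" by (rule Max_ge) auto
      ultimately show "g i \<sigma> \<le> (MAX j. g j \<tau>) + \<epsilon> * (\<sigma> - \<tau>)"
        by linarith
    qed
  qed
qed

lemma Max_le_Max_plus_slope:
  assumes "a \<le> b" "\<epsilon> > 0"
  shows "g i b \<le> (MAX j. g j a) + \<epsilon> * (b - a)"
proof -
  define c where "c = (MAX j. g j a)"
  define C where "C = {\<sigma> \<in> {a..b}. \<forall>i. g i \<sigma> \<le> c + \<epsilon> * (\<sigma> - a)}"
  have "b \<in> C"
  proof (rule real_closed_induct[OF \<open>a \<le> b\<close>])
    have "C = (\<Inter>i. {\<sigma> \<in> {a..b}. g i \<sigma> \<le> c + \<epsilon> * (\<sigma> - a)})"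
      unfolding C_def by auto
    also have "closed \<dots>"
      by (intro closed_INT ballI continuous_on_closed_Collect_le g_cont continuous_intros closed_atLeastAtMost)
    finally show "closed C" .
    show "a \<in> C" unfolding C_def c_def using assms by (auto intro: Max_ge)
  next
    fix \<tau> assume "\<tau> \<in> C" "a \<le> \<tau>" "\<tau> < b"
    then have "(MAX j. g j \<tau>) \<le> c + \<epsilon> * (\<tau> - a)"
      unfolding C_def by (simp add: Max_le_iff)
    then have slope: "(MAX j. g j \<tau>) + \<epsilon> * (\<sigma> - \<tau>) \<le> c + \<epsilon> * (\<sigma> - a)" for \<sigma>
      by (simp add: algebra_simps)
    have "eventually (\<lambda>\<sigma>. \<sigma> \<le> b \<longrightarrow> g i \<sigma> \<le> (MAX j. g j \<tau>) + \<epsilon> * (\<sigma> - \<tau>)) (at_right \<tau>)" for i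
      using eventually_right_growth_le \<open>a \<le> \<tau>\<close> \<open>\<tau> < b\<close> \<open>\<epsilon> > 0\<close> by simp
    then have "eventually (\<lambda>\<sigma>. \<sigma> \<le> b \<longrightarrow> g i \<sigma> \<le> c + \<epsilon> * (\<sigma> - a)) (at_right \<tau>)" for i
      by (rule eventually_mono) (use slope order.trans in blast)
    then have "eventually (\<lambda>\<sigma>. \<forall>i. \<sigma> \<le> b \<longrightarrow> g i \<sigma> \<le> c + \<epsilon> * (\<sigma> - a)) (at_right \<tau>)"
      by (rule eventually_all_finite)
    then show "eventually (\<lambda>\<sigma>. \<sigma> \<le> b \<longrightarrow> \<sigma> \<in> C) (at_right \<tau>)"
      using eventually_at_right_less[of \<tau>]
      by eventually_elim (use \<open>a \<le> \<tau>\<close> in \<open>auto simp: C_def\<close>)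
  qed
  then show ?thesis unfolding C_def c_def by auto
qed

lemma Max_antimono:
  assumes "a \<le> b"
  shows "(MAX i. g i b) \<le> (MAX i. g i a)"
proof -
  have "g i b \<le> (MAX j. g j a) + e" if "e > 0" for i e
  proof -
    have "e / (b - a + 1) * (b - a) \<le> e" using that assms by (simp add: field_simps)
    then show ?thesis
      using Max_le_Max_plus_slope[OF assms, of "e / (b - a + 1)" i] that assms by simp
  qed
  then show ?thesis by (auto intro: field_le_epsilon)
qed

end

lemma caratheodory_solutionD:
  assumes "caratheodory_solution F x" "0 \<le> t"
  shows "(\<lambda>s. F s (x s)) integrable_on {0..t}"
    and "x t = x 0 + integral {0..t} (\<lambda>s. F s (x s))"
  using assms unfolding caratheodory_solution_def absolutely_integrable_on_def by blast+

lemma caratheodory_solution_has_integral: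
  assumes sol: "caratheodory_solution F x" and "0 \<le> \<tau>" "\<tau> \<le> \<sigma>"
  shows "((\<lambda>s. F s (x s)) has_integral x \<sigma> - x \<tau>) {\<tau>..\<sigma>}"
proof -
  let ?f = "\<lambda>s. F s (x s)"
  have int: "?f integrable_on {0..\<sigma>}"
    using caratheodory_solutionD(1)[OF sol] assms by simp
  have "x \<sigma> - x \<tau> = integral {0..\<sigma>} ?f - integral {0..\<tau>} ?f"
    using caratheodory_solutionD(2)[OF sol, of \<sigma>] caratheodory_solutionD(2)[OF sol, of \<tau>] assms
    by simp
  also have "\<dots> = integral {\<tau>..\<sigma>} ?f"
    using Henstock_Kurzweil_Integration.integral_combine[OF \<open>0 \<le> \<tau>\<close> \<open>\<tau> \<le> \<sigma>\<close> int]
    by (simp add: algebra_simps)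
  finally show ?thesis
    using integrable_on_subinterval[OF int, of \<tau> \<sigma>] assms
    by (simp add: has_integral_integrable_integral)
qed

lemma caratheodory_solution_continuous_on:
  assumes sol: "caratheodory_solution F x"
  shows "continuous_on {0..b} x"
proof (cases "0 \<le> b")
  case True
  then have "continuous_on {0..b} (\<lambda>t. x 0 + integral {0..t} (\<lambda>s. F s (x s)))"
    by (intro continuous_intros indefinite_integral_continuous_1 caratheodory_solutionD(1)[OF sol])
  then show ?thesis
    by (rule continuous_on_eq) (simp add: caratheodory_solutionD(2)[OF sol, symmetric])
qed simp

lemma inner_consensus_field_le:
  fixes y :: "real^'d::finite^'n::finite"
  assumes "\<And>j. M i j t \<in> {0..1}"
  shows "v \<bullet> (consensus_field lam M phi t y $ i)
    \<le> (\<Sum>j\<in>UNIV.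
          max (lam i y / real CARD('n) * phi i j (y $ i) (y $ j) * (v \<bullet> y $ j - v \<bullet> y $ i)) 0)"
proof -
  define w where
    "w j = lam i y / real CARD('n) * phi i j (y $ i) (y $ j) * (v \<bullet> y $ j - v \<bullet> y $ i)" for j
  have "v \<bullet> (consensus_field lam M phi t y $ i) = (\<Sum>j\<in>UNIV. M i j t * w j)"
    unfolding consensus_field_def w_def
    by (simp add: inner_sum_right inner_diff_right sum_distrib_left)
      (rule sum.cong; simp add: field_simps)
  also have "\<dots> \<le> (\<Sum>j\<in>UNIV. max (w j) 0)"
  proof (rule sum_mono)
    fix j
    have "0 \<le> M i j t" "M i j t \<le> 1" using assms[of j] by auto
    then show "M i j t * w j \<le> max (w j) 0"
      by (cases "w j \<ge> 0") (auto simp: mult_left_le_one_le mult_nonneg_nonpos)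
  qed
  finally show ?thesis unfolding w_def .
qed

lemma consensus_Max_inner_antimono:
  fixes x :: "real \<Rightarrow> real^'d::finite^'n::finite"
  assumes M_range: "\<And>i j t. t \<ge> 0 \<Longrightarrow> M i j t \<in> {0..1}"
    and lam_cont: "\<And>i. continuous_on UNIV (lam i)"
    and lam_nonneg: "\<And>i y. lam i y \<ge> 0"
    and phi_cont: "\<And>i j. continuous_on UNIV (\<lambda>(a, b). phi i j a b)"
    and phi_nonneg: "\<And>i j a b. phi i j a b \<ge> 0"
    and sol: "caratheodory_solution (consensus_field lam M phi) x"
    and "0 \<le> t" "t \<le> s"
  shows "(MAX i. v \<bullet> x s $ i) \<le> (MAX i. v \<bullet> x t $ i)"
proof -
  define w where "w i j \<sigma> = lam i (x \<sigma>) / real CARD('n) * phi i j (x \<sigma> $ i) (x \<sigma> $ j)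
    * (v \<bullet> x \<sigma> $ j - v \<bullet> x \<sigma> $ i)" for i j \<sigma>
  have x_cont: "continuous_on {t..s} x"
    using caratheodory_solution_continuous_on[OF sol, of s] \<open>0 \<le> t\<close>
    by (auto elim: continuous_on_subset)
  interpret max_rate_family t s "\<lambda>i \<sigma>. v \<bullet> x \<sigma> $ i"
    "\<lambda>i \<sigma>. v \<bullet> (consensus_field lam M phi \<sigma> (x \<sigma>) $ i)"
    "\<lambda>i \<sigma>. \<Sum>j\<in>UNIV. max (w i j \<sigma>) 0"
  proof
    fix i
    show "continuous_on {t..s} (\<lambda>\<sigma>. v \<bullet> x \<sigma> $ i)"
      by (intro continuous_intros x_cont)
    have "continuous_on {t..s} (\<lambda>\<sigma>. lam i (x \<sigma>))"
      by (rule continuous_on_compose2[OF lam_cont x_cont]) auto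
    moreover have "continuous_on {t..s} (\<lambda>\<sigma>. phi i j (x \<sigma> $ i) (x \<sigma> $ j))" for j
      using continuous_on_compose2[OF phi_cont, of _ "\<lambda>\<sigma>. (x \<sigma> $ i, x \<sigma> $ j)"]
      by (simp add: continuous_intros x_cont)
    ultimately show "continuous_on {t..s} (\<lambda>\<sigma>. \<Sum>j\<in>UNIV. max (w i j \<sigma>) 0)"
      unfolding w_def by (intro continuous_intros x_cont) auto
  next
    fix i \<tau> \<sigma> assume "t \<le> \<tau>" "\<tau> \<le> \<sigma>" "\<sigma> \<le> s"
    with caratheodory_solution_has_integral[OF sol, of \<tau> \<sigma>] \<open>0 \<le> t\<close>
    have "((\<lambda>\<sigma>. consensus_field lam M phi \<sigma> (x \<sigma>)) has_integral x \<sigma> - x \<tau>) {\<tau>..\<sigma>}" by simp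
    from has_integral_linear[OF this, of "\<lambda>y. v \<bullet> y $ i"]
    show "((\<lambda>\<sigma>. v \<bullet> (consensus_field lam M phi \<sigma> (x \<sigma>) $ i))
        has_integral v \<bullet> x \<sigma> $ i - v \<bullet> x \<tau> $ i) {\<tau>..\<sigma>}"
      by (simp add: o_def inner_diff_right
          bounded_linear_compose[OF bounded_linear_inner_right bounded_linear_vec_nth])
  next
    fix i \<sigma> assume "\<sigma> \<in> {t..s}"
    then show "v \<bullet> (consensus_field lam M phi \<sigma> (x \<sigma>) $ i) \<le> (\<Sum>j\<in>UNIV. max (w i j \<sigma>) 0)"
      unfolding w_def using M_range \<open>0 \<le> t\<close> by (intro inner_consensus_field_le) auto
  next
    fix i \<sigma> assume "\<And>j. v \<bullet> x \<sigma> $ j \<le> v \<bullet> x \<sigma> $ i"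
    then have "w i j \<sigma> \<le> 0" for j
      unfolding w_def using lam_nonneg phi_nonneg by (intro mult_nonneg_nonpos) auto
    then show "(\<Sum>j\<in>UNIV. max (w i j \<sigma>) 0) \<le> 0" by simp
  qed
  show ?thesis using Max_antimono \<open>t \<le> s\<close> .
qed

lemma obtain_inner_le_if_Max_inner_le:
  fixes y z :: "'a::real_inner^'n::finite"
  assumes "(MAX i. v \<bullet> y $ i) \<le> (MAX i. v \<bullet> z $ i)"
  obtains j where "v \<bullet> y $ i \<le> v \<bullet> z $ j"
proof -
  have "(MAX i. v \<bullet> z $ i) \<in> range (\<lambda>i. v \<bullet> z $ i)" by (rule Max_in) auto
  then obtain j where "(MAX i. v \<bullet> z $ i) = v \<bullet> z $ j" by blast
  moreover have "v \<bullet> y $ i \<le> (MAX i. v \<bullet> y $ i)" by (rule Max_ge) auto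
  ultimately show thesis using assms that by auto
qed

lemma supp_subset_if_Max_inner_le:
  fixes y z :: "real^'d::finite^'n::finite"
  assumes "\<And>v. (MAX i. v \<bullet> y $ i) \<le> (MAX i. v \<bullet> z $ i)"
  shows "supp y \<subseteq> supp z"
proof -
  define K where "K = convex hull (range (\<lambda>j. z $ j))"
  have "closed K"
    unfolding K_def by (intro compact_imp_closed finite_imp_compact_convex_hull) auto
  have "y $ i \<in> K" for i
  proof (rule ccontr)
    assume "y $ i \<notin> K"
    then obtain u c where "u \<bullet> y $ i < c" and sep: "\<And>k. k \<in> K \<Longrightarrow> u \<bullet> k > c"
      using separating_hyperplane_closed_point[OF _ \<open>closed K\<close>] unfolding K_def by blast
    obtain j where "(- u) \<bullet> y $ i \<le> (- u) \<bullet> z $ j"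
      using obtain_inner_le_if_Max_inner_le[OF assms] .
    moreover have "z $ j \<in> K" unfolding K_def by (rule hull_inc) auto
    ultimately show False using sep \<open>u \<bullet> y $ i < c\<close> by force
  qed
  then have "convex hull (range (\<lambda>i. y $ i)) \<subseteq> K"
    unfolding K_def by (intro hull_minimal) auto
  then show ?thesis
    unfolding supp_def K_def[symmetric] using \<open>closed K\<close> by (simp add: closure_minimal)
qed

lemma Max_component_le_if_Max_inner_le:
  fixes y z :: "real^'d::finite^'n::finite"
  assumes "\<And>v. (MAX i. v \<bullet> y $ i) \<le> (MAX i. v \<bullet> z $ i)"
  shows "(MAX j. y $ j $ k) \<le> (MAX j. z $ j $ k)"
proof (subst Max_le_iff, simp_all, intro allI)
  fix j
  obtain j' where "axis k 1 \<bullet> y $ j \<le> axis k 1 \<bullet> z $ j'"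
    using obtain_inner_le_if_Max_inner_le[OF assms] .
  then have "y $ j $ k \<le> z $ j' $ k" by (simp add: inner_axis')
  also have "\<dots> \<le> (MAX j. z $ j $ k)" by (rule Max_ge) auto
  finally show "y $ j $ k \<le> (MAX j. z $ j $ k)" .
qed

lemma Min_component_ge_if_Max_inner_le:
  fixes y z :: "real^'d::finite^'n::finite"
  assumes "\<And>v. (MAX i. v \<bullet> y $ i) \<le> (MAX i. v \<bullet> z $ i)"
  shows "(MIN j. z $ j $ k) \<le> (MIN j. y $ j $ k)"
proof (subst Min_ge_iff, simp_all, intro allI)
  fix j
  obtain j' where "axis k (-1) \<bullet> y $ j \<le> axis k (-1) \<bullet> z $ j'"
    using obtain_inner_le_if_Max_inner_le[OF assms] .
  then have "z $ j' $ k \<le> y $ j $ k" by (simp add: inner_axis')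
  have "(MIN j. z $ j $ k) \<le> z $ j' $ k" by (rule Min_le) auto
  also have "\<dots> \<le> y $ j $ k" by fact
  finally show "(MIN j. z $ j $ k) \<le> y $ j $ k" .
qed

lemma Max_dist_le_if_Max_inner_le:
  fixes y z :: "real^'d::finite^'n::finite"
  assumes "\<And>v. (MAX i. v \<bullet> y $ i) \<le> (MAX i. v \<bullet> z $ i)"
  shows "(MAX (i, j). norm (y $ i - y $ j)) \<le> (MAX (i, j). norm (z $ i - z $ j))"
proof (subst Max_le_iff, simp_all, intro allI)
  fix i j
  define u where "u = y $ i - y $ j"
  obtain p where p: "u \<bullet> y $ i \<le> u \<bullet> z $ p"
    using obtain_inner_le_if_Max_inner_le[OF assms] .
  obtain q where q: "(- u) \<bullet> y $ j \<le> (- u) \<bullet> z $ q"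
    using obtain_inner_le_if_Max_inner_le[OF assms] .
  have "norm u ^ 2 = u \<bullet> y $ i - u \<bullet> y $ j"
    unfolding u_def by (simp add: power2_norm_eq_inner inner_diff_right)
  also have "\<dots> \<le> u \<bullet> (z $ p - z $ q)" using p q by (simp add: inner_diff_right)
  also have "\<dots> \<le> norm u * norm (z $ p - z $ q)" by (rule norm_cauchy_schwarz)
  finally have "norm u \<le> norm (z $ p - z $ q)"
    by (cases "norm u = 0") (auto simp: power2_eq_square)
  also have "\<dots> \<le> (MAX (i, j). norm (z $ i - z $ j))" by (rule Max_ge) auto
  finally show "norm (y $ i - y $ j) \<le> (MAX (i, j). norm (z $ i - z $ j))"
    unfolding u_def .
qed

theorem proposition1:
  fixes x :: "real \<Rightarrow> real^'d::finite^'n::finite"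
    and lam :: "'n \<Rightarrow> real^'d^'n \<Rightarrow> real"
    and M :: "'n \<Rightarrow> 'n \<Rightarrow> real \<Rightarrow> real"
    and phi :: "'n \<Rightarrow> 'n \<Rightarrow> real^'d \<Rightarrow> real^'d \<Rightarrow> real"
  assumes N2: "CARD('n) \<ge> 2"
    and M_meas: "\<And>i j. M i j \<in> borel_measurable (restrict_space lebesgue {0..})"
    and M_range: "\<And>i j t. t \<ge> 0 \<Longrightarrow> M i j t \<in> {0..1}"
    and lam_lip: "\<And>i. \<exists>C. C-lipschitz_on UNIV (lam i)"
    and lam_pos: "\<And>i y. lam i y > 0"
    and phi_lip: "\<And>i j. \<exists>C. C-lipschitz_on UNIV (\<lambda>(a, b). phi i j a b)"
    and phi_pos: "\<And>i j a b. phi i j a b > 0"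
    and sol: "caratheodory_solution (consensus_field lam M phi) x"
  shows "(\<forall>t s. 0 \<le> t \<and> t \<le> s \<longrightarrow> supp (x s) \<subseteq> supp (x t))
       \<and> (CARD('d) = 1 \<longrightarrow>
           (\<forall>t s k. 0 \<le> t \<and> t \<le> s \<longrightarrow>
              (MAX j. x s $ j $ k) \<le> (MAX j. x t $ j $ k) \<and>
              (MIN j. x t $ j $ k) \<le> (MIN j. x s $ j $ k)))
       \<and> (\<forall>t s. 0 \<le> t \<and> t \<le> s \<longrightarrow>
              (MAX (i, j). norm (x s $ i - x s $ j)) \<le> (MAX (i, j). norm (x t $ i - x t $ j)))"
  \<comment> \<open>\<open>N2\<close> and \<open>M_meas\<close> are not needed, the coordinate bounds hold in every dimension,
    and Lipschitz continuity and positivity are only used as continuity and non-negativity.\<close>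
proof -
  have "continuous_on UNIV (lam i)" "continuous_on UNIV (\<lambda>(a, b). phi i j a b)" for i j
    using lam_lip phi_lip lipschitz_on_continuous_on by blast+
  then have Max_inner_antimono:
      "\<And>v. (MAX i. v \<bullet> x s $ i) \<le> (MAX i. v \<bullet> x t $ i)" if "0 \<le> t" "t \<le> s" for t s
    using consensus_Max_inner_antimono[OF M_range _ _ _ _ sol that] lam_pos phi_pos
    by (simp add: less_imp_le)
  show ?thesis
  proof (intro conjI allI impI; elim conjE)
    fix t s :: real assume "0 \<le> t" "t \<le> s"
    note antimono = Max_inner_antimono[OF this]
    show "supp (x s) \<subseteq> supp (x t)"
      using antimono by (rule supp_subset_if_Max_inner_le)
    show "(MAX (i, j). norm (x s $ i - x s $ j)) \<le> (MAX (i, j). norm (x t $ i - x t $ j))"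
      using antimono by (rule Max_dist_le_if_Max_inner_le)
    fix k
    show "(MAX j. x s $ j $ k) \<le> (MAX j. x t $ j $ k)"
      using antimono by (rule Max_component_le_if_Max_inner_le)
    show "(MIN j. x t $ j $ k) \<le> (MIN j. x s $ j $ k)"
      using antimono by (rule Min_component_ge_if_Max_inner_le)
  qed
qed

end
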